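(* For the unit-sum normalization, there is an absolute constant $C>0$ such that for every $n\ge1$ and every ordinal mechanism $J$ (deterministic or randomized, not necessarily truthful) on $n$ agents and $n$ items, $ar(J)\le C/\sqrt n$.
   Context: Agents $N=\{1,\dots,n\}$, items $M=\{1,\dots,n\}$, outcomes are bijections $\mu$ ($O$ the set of outcomes). Unit-sum valuation functions: injective $u_i:M\to\mathbb R_{\ge0}$ with $\sum_j u_i(j)=1$; $V^n$ the set of profiles. A mechanism maps each profile to a distribution over $O$; it is ordinal if its output distribution is unchanged when any one agent's valuation function is replaced by another inducing the same ordering of the items. $ar(J)=\inf_{\mathbf u\in V^n}\mathbb E[\sum_i u_i(J(\mathbf u)_i)]/\max_{\mu\in O}\sum_i u_i(\mu_i)$. *)

theory Defs
  imports "HOL-Probability.Probability" "HOL-Combinatorics.Permutations"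
begin

text \<open>Agents and items are both indexed by {0..<n}. An outcome is a bijection
  from agents to items, represented as a permutation of {..<n} (identity outside).\<close>

definition outcomes :: "nat \<Rightarrow> (nat \<Rightarrow> nat) set" where
  "outcomes n = {\<mu>. \<mu> permutes {..<n}}"

definition unit_sum_valuation :: "nat \<Rightarrow> (nat \<Rightarrow> real) \<Rightarrow> bool" where
  "unit_sum_valuation n v \<longleftrightarrow>
     inj_on v {..<n} \<and> (\<forall>j<n. 0 \<le> v j) \<and> (\<Sum>j<n. v j) = 1 \<and> (\<forall>j\<ge>n. v j = 0)"

definition profiles :: "nat \<Rightarrow> (nat \<Rightarrow> nat \<Rightarrow> real) set" where
  "profiles n = {U. (\<forall>i<n. unit_sum_valuation n (U i)) \<and> (\<forall>i\<ge>n. U i = (\<lambda>_. 0))}"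

definition mechanism :: "nat \<Rightarrow> ((nat \<Rightarrow> nat \<Rightarrow> real) \<Rightarrow> (nat \<Rightarrow> nat) pmf) \<Rightarrow> bool" where
  "mechanism n J \<longleftrightarrow> (\<forall>U\<in>profiles n. set_pmf (J U) \<subseteq> outcomes n)"

definition ordinal :: "nat \<Rightarrow> ((nat \<Rightarrow> nat \<Rightarrow> real) \<Rightarrow> (nat \<Rightarrow> nat) pmf) \<Rightarrow> bool" where
  "ordinal n J \<longleftrightarrow>
     (\<forall>U\<in>profiles n. \<forall>i<n. \<forall>v. unit_sum_valuation n v \<and>
        (\<forall>j<n. \<forall>k<n. U i j < U i k \<longleftrightarrow> v j < v k) \<longrightarrow> J (U(i := v)) = J U)"

definition welfare :: "nat \<Rightarrow> (nat \<Rightarrow> nat \<Rightarrow> real) \<Rightarrow> (nat \<Rightarrow> nat) \<Rightarrow> real" where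
  "welfare n U \<mu> = (\<Sum>i<n. U i (\<mu> i))"

definition approx_ratio :: "nat \<Rightarrow> ((nat \<Rightarrow> nat \<Rightarrow> real) \<Rightarrow> (nat \<Rightarrow> nat) pmf) \<Rightarrow> real" where
  "approx_ratio n J =
     (INF U\<in>profiles n. measure_pmf.expectation (J U) (welfare n U)
                        / Max (welfare n U ` outcomes n))"

end

theory Submission
  imports Defs "HOL-Library.Discrete_Functions"
begin

text \<open>Split the first \<open>k\<^sup>2 \<le> n\<close> agents into \<open>k\<close> groups of \<open>k\<close>, the agents of group \<open>g\<close>
  ranking item \<open>g\<close> first. On a profile where all values are \<open>O(1/n)\<close> an ordinal mechanism outputs
  some lottery \<open>D\<close>; since the agents of a group compete for one item, every group has an agent
  that receives its favourite with probability at most \<open>1/k\<close> under \<open>D\<close>. Letting exactly these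
  \<open>k\<close> agents value their favourite at least \<open>1/2\<close>, without changing any ordering, keeps the
  output \<open>D\<close>: the expected welfare stays below 4 while the optimum is at least \<open>k/2\<close>.
  Taking \<open>k = \<lfloor>\<surd>n\<rfloor>\<close> gives the bound \<open>16/\<surd>n\<close>.\<close>

lemma unit_sum_valuation_nonneg: "unit_sum_valuation n v \<Longrightarrow> 0 \<le> v j"
  by (cases "j < n") (auto simp: unit_sum_valuation_def)

lemma unit_sum_valuation_le_1:
  assumes "unit_sum_valuation n v" shows "v j \<le> 1"
proof (cases "j < n")
  case True
  then have "v j \<le> (\<Sum>j<n. v j)"
    using assms by (intro member_le_sum) (auto simp: unit_sum_valuation_def)
  then show ?thesis using assms by (simp add: unit_sum_valuation_def)
qed (use assms in \<open>auto simp: unit_sum_valuation_def\<close>)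

definition normalized_valuation :: "nat \<Rightarrow> (nat \<Rightarrow> real) \<Rightarrow> nat \<Rightarrow> real" where
  "normalized_valuation n w j = (if j < n then w j / (\<Sum>j<n. w j) else 0)"

lemma unit_sum_valuation_normalized:
  assumes "1 \<le> n" "inj_on w {..<n}" "\<forall>j<n. 0 < w j"
  shows "unit_sum_valuation n (normalized_valuation n w)"
proof -
  have S: "0 < (\<Sum>j<n. w j)" using assms by (intro sum_pos) (auto simp: lessThan_empty_iff)
  have "inj_on (normalized_valuation n w) {..<n}"
    using assms(2) S by (auto simp: inj_on_def normalized_valuation_def)
  moreover have "(\<Sum>j<n. normalized_valuation n w j) = 1"
    using S by (simp add: normalized_valuation_def sum_divide_distrib[symmetric])
  ultimately show ?thesis
    using assms(3) S by (auto simp: unit_sum_valuation_def normalized_valuation_def less_imp_le)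
qed

lemma normalized_valuation_less_iff:
  assumes "\<forall>j<n. 0 < w j" "j < n" "j' < n"
  shows "normalized_valuation n w j < normalized_valuation n w j' \<longleftrightarrow> w j < w j'"
proof -
  have "0 < (\<Sum>j<n. w j)" using assms by (intro sum_pos) auto
  then show ?thesis using assms(2,3) by (simp add: normalized_valuation_def divide_less_cancel)
qed

lemma normalized_valuation_le:
  assumes "j < n \<Longrightarrow> w j \<le> c" "0 \<le> c" "0 < s" "s \<le> (\<Sum>j<n. w j)"
  shows "normalized_valuation n w j \<le> c / s"
proof (cases "j < n \<and> 0 \<le> w j")
  case True
  have "w j / (\<Sum>j<n. w j) \<le> c / s" using assms True by (intro frac_le) auto
  then show ?thesis using True by (simp add: normalized_valuation_def)
next
  case False
  have "0 < (\<Sum>j<n. w j)" using assms(3,4) by linarith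
  then have "normalized_valuation n w j \<le> 0"
    using False by (auto simp: normalized_valuation_def divide_nonpos_pos)
  also have "0 \<le> c / s" using assms(2,3) by simp
  finally show ?thesis .
qed

definition base_weight :: "nat \<Rightarrow> nat \<Rightarrow> nat \<Rightarrow> real" where
  "base_weight n a j = (if j = a then 3 * real n else 2 * real n - real j)"

definition bumped_weight :: "nat \<Rightarrow> nat \<Rightarrow> nat \<Rightarrow> real" where
  "bumped_weight n a j = base_weight n a j + (if j = a then 3 * real n ^ 2 else 0)"

lemma base_weight_gt: "j < n \<Longrightarrow> real n < base_weight n a j"
  by (auto simp: base_weight_def)

lemma base_weight_le: "base_weight n a j \<le> 3 * real n"
  by (auto simp: base_weight_def)

lemma base_weight_pos: "\<forall>j<n. 0 < base_weight n a j"
  using base_weight_gt of_nat_0_le_iff by (metis le_less_trans)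

lemma inj_on_base_weight: "inj_on (base_weight n a) {..<n}"
  by (auto simp: inj_on_def base_weight_def split: if_splits)

lemma sum_base_weight_bounds:
  "real n ^ 2 \<le> (\<Sum>j<n. base_weight n a j)" "(\<Sum>j<n. base_weight n a j) \<le> 3 * real n ^ 2"
proof -
  have "(\<Sum>j<n. real n) \<le> (\<Sum>j<n. base_weight n a j)"
    by (intro sum_mono) (simp add: base_weight_gt less_imp_le)
  then show "real n ^ 2 \<le> (\<Sum>j<n. base_weight n a j)" by (simp add: power2_eq_square)
  have "(\<Sum>j<n. base_weight n a j) \<le> (\<Sum>j<n. 3 * real n)"
    by (intro sum_mono) (rule base_weight_le)
  then show "(\<Sum>j<n. base_weight n a j) \<le> 3 * real n ^ 2" by (simp add: power2_eq_square)
qed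

text \<open>The bump goes on the item that is already on top, so it does not change the ordering.\<close>
lemma bumped_weight_less_iff:
  assumes "j < n" "j' < n"
  shows "bumped_weight n a j < bumped_weight n a j' \<longleftrightarrow> base_weight n a j < base_weight n a j'"
proof -
  define M where "M = 3 * real n ^ 2"
  have "0 \<le> M" by (simp add: M_def)
  then show ?thesis
    unfolding bumped_weight_def base_weight_def M_def[symmetric] using assms
    by (cases "j = a"; cases "j' = a") auto
qed

lemma inj_on_bumped_weight: "inj_on (bumped_weight n a) {..<n}"
proof (rule inj_onI)
  fix j j' assume "j \<in> {..<n}" "j' \<in> {..<n}" "bumped_weight n a j = bumped_weight n a j'"
  then show "j = j'"
    using bumped_weight_less_iff[of j n j' a] bumped_weight_less_iff[of j' n j a]
      inj_on_base_weight[of n a] by (auto simp: inj_on_def neq_iff)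
qed

lemma sum_bumped_weight:
  "a < n \<Longrightarrow> (\<Sum>j<n. bumped_weight n a j) = (\<Sum>j<n. base_weight n a j) + 3 * real n ^ 2"
  by (simp add: bumped_weight_def sum.distrib)

lemma bumped_weight_pos: "\<forall>j<n. 0 < bumped_weight n a j"
  using base_weight_pos by (auto simp: bumped_weight_def add_pos_nonneg)

definition light_valuation :: "nat \<Rightarrow> nat \<Rightarrow> nat \<Rightarrow> real" where
  "light_valuation n a = normalized_valuation n (base_weight n a)"

definition heavy_valuation :: "nat \<Rightarrow> nat \<Rightarrow> nat \<Rightarrow> real" where
  "heavy_valuation n a = normalized_valuation n (bumped_weight n a)"

lemma unit_sum_valuation_light: "1 \<le> n \<Longrightarrow> unit_sum_valuation n (light_valuation n a)"
  unfolding light_valuation_def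
  by (rule unit_sum_valuation_normalized) (simp_all add: inj_on_base_weight base_weight_pos)

lemma unit_sum_valuation_heavy: "1 \<le> n \<Longrightarrow> unit_sum_valuation n (heavy_valuation n a)"
  unfolding heavy_valuation_def
  by (rule unit_sum_valuation_normalized) (simp_all add: inj_on_bumped_weight bumped_weight_pos)

lemma heavy_valuation_less_iff_light:
  "j < n \<Longrightarrow> j' < n \<Longrightarrow>
    heavy_valuation n a j < heavy_valuation n a j' \<longleftrightarrow> light_valuation n a j < light_valuation n a j'"
  by (simp add: heavy_valuation_def light_valuation_def normalized_valuation_less_iff
      base_weight_pos bumped_weight_pos bumped_weight_less_iff)

lemma light_valuation_le:
  assumes "1 \<le> n" shows "light_valuation n a j \<le> 3 / real n"
proof -
  have "light_valuation n a j \<le> 3 * real n / real n ^ 2"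
    unfolding light_valuation_def using assms sum_base_weight_bounds(1)[of n a]
    by (intro normalized_valuation_le) (auto simp: base_weight_le)
  then show ?thesis using assms by (simp add: power2_eq_square)
qed

lemma heavy_valuation_le:
  assumes "1 \<le> n" "a < n" "j \<noteq> a" shows "heavy_valuation n a j \<le> 1 / real n"
proof -
  have "3 * real n ^ 2 \<le> (\<Sum>j<n. bumped_weight n a j)"
    using sum_bumped_weight[OF assms(2)] sum_base_weight_bounds(1)[of n a] zero_le_power2[of "real n"]
    by linarith
  then have "heavy_valuation n a j \<le> 3 * real n / (3 * real n ^ 2)"
    unfolding heavy_valuation_def using assms
    by (intro normalized_valuation_le) (auto simp: bumped_weight_def base_weight_le)
  then show ?thesis using assms(1) by (simp add: power2_eq_square)
qed

lemma heavy_valuation_top_ge: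
  assumes "1 \<le> n" "a < n" shows "1 / 2 \<le> heavy_valuation n a a"
proof -
  have S: "0 < (\<Sum>j<n. base_weight n a j)" "(\<Sum>j<n. base_weight n a j) \<le> 3 * real n ^ 2"
    using assms(1) sum_base_weight_bounds[of n a] by (auto intro: less_le_trans[of 0 "real n ^ 2"])
  have "1 / 2 \<le> 3 * real n ^ 2 / ((\<Sum>j<n. base_weight n a j) + 3 * real n ^ 2)"
    using S by (simp add: field_simps)
  also have "\<dots> \<le> (base_weight n a a + 3 * real n ^ 2) / ((\<Sum>j<n. base_weight n a j) + 3 * real n ^ 2)"
    using S base_weight_gt[OF assms(2), of a] by (intro divide_right_mono) auto
  also have "\<dots> = bumped_weight n a a / (\<Sum>j<n. bumped_weight n a j)"
    unfolding sum_bumped_weight[OF assms(2)] by (simp add: bumped_weight_def)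
  finally show ?thesis using assms(2) by (simp add: heavy_valuation_def normalized_valuation_def)
qed

lemma welfare_nonneg:
  assumes "U \<in> profiles n" shows "0 \<le> welfare n U \<mu>"
  using assms unfolding welfare_def profiles_def
  by (intro sum_nonneg) (auto intro: unit_sum_valuation_nonneg)

lemma approx_ratio_le:
  assumes "mechanism n J" "U \<in> profiles n"
  shows "approx_ratio n J \<le> measure_pmf.expectation (J U) (welfare n U) / Max (welfare n U ` outcomes n)"
proof -
  have "0 \<le> measure_pmf.expectation (J V) (welfare n V) / Max (welfare n V ` outcomes n)"
    if "V \<in> profiles n" for V
  proof -
    have "welfare n V id \<le> Max (welfare n V ` outcomes n)"
      by (intro Max_ge) (auto simp: outcomes_def finite_permutations permutes_id)
    then have "0 \<le> Max (welfare n V ` outcomes n)"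
      using welfare_nonneg[OF that, of id] by linarith
    then show ?thesis
      by (intro divide_nonneg_nonneg integral_nonneg_AE AE_I2 welfare_nonneg[OF that])
  qed
  then show ?thesis
    unfolding approx_ratio_def using assms(2) by (intro cInf_lower bdd_belowI[of _ 0]) auto
qed

lemma profiles_override:
  assumes "U \<in> profiles n" "A \<subseteq> {..<n}" "\<And>i. i < n \<Longrightarrow> unit_sum_valuation n (W i)"
  shows "(\<lambda>i. if i \<in> A then W i else U i) \<in> profiles n"
  using assms by (auto simp: profiles_def)

lemma ordinal_override_eq:
  assumes "ordinal n J" "U \<in> profiles n" "A \<subseteq> {..<n}"
    and W: "\<And>i. i < n \<Longrightarrow> unit_sum_valuation n (W i)"
    and same_order: "\<And>i j j'. i < n \<Longrightarrow> j < n \<Longrightarrow> j' < n \<Longrightarrow> W i j < W i j' \<longleftrightarrow> U i j < U i j'"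
  shows "J (\<lambda>i. if i \<in> A then W i else U i) = J U"
  using finite_subset[OF assms(3) finite_lessThan] assms(3)
proof (induction A rule: finite_induct)
  case (insert x A)
  define V where "V = (\<lambda>i. if i \<in> A then W i else U i)"
  have V: "V \<in> profiles n" "V x = U x"
    using profiles_override[OF assms(2) _ W] insert by (auto simp: V_def)
  have "J (\<lambda>i. if i \<in> insert x A then W i else U i) = J (V(x := W x))"
    by (rule arg_cong[of _ _ J]) (auto simp: V_def)
  also have "J (V(x := W x)) = J V"
    using assms(1) V W same_order insert.prems unfolding ordinal_def by auto
  finally show ?case using insert by (simp add: V_def)
qed simp

lemma ex_permutes_extending:
  assumes "finite S" "A \<subseteq> S" "inj_on f A" "f ` A \<subseteq> S"
  obtains p where "p permutes S" "\<And>x. x \<in> A \<Longrightarrow> p x = f x"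
proof -
  have "card (S - A) = card (S - f ` A)"
    using assms by (simp add: card_Diff_subset card_image finite_subset)
  then obtain h where h: "bij_betw h (S - A) (S - f ` A)"
    using finite_same_card_bij[of "S - A" "S - f ` A"] assms(1) by blast
  define p where "p x = (if x \<in> A then f x else if x \<in> S then h x else x)" for x
  have "bij_betw (\<lambda>x. if x \<in> A then f x else h x) (A \<union> (S - A)) (f ` A \<union> (S - f ` A))"
    using inj_on_imp_bij_betw[OF assms(3)] h by (rule bij_betw_disjoint_Un) auto
  moreover have "A \<union> (S - A) = S" "f ` A \<union> (S - f ` A) = S" using assms(2,4) by auto
  ultimately have "bij_betw (\<lambda>x. if x \<in> A then f x else h x) S S" by simp
  moreover have "bij_betw p S S \<longleftrightarrow> bij_betw (\<lambda>x. if x \<in> A then f x else h x) S S"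
    by (rule bij_betw_cong) (simp add: p_def)
  ultimately have "bij_betw p S S" by simp
  then have "p permutes S"
    by (rule bij_imp_permutes) (use assms(2) in \<open>auto simp: p_def\<close>)
  then show thesis by (rule that) (simp add: p_def)
qed

lemma sum_of_bool_eq_le_1:
  assumes "inj_on \<mu> A" "finite A"
  shows "(\<Sum>i\<in>A. of_bool (\<mu> i = g) :: real) \<le> 1"
proof -
  have "card (\<mu> -` {g} \<inter> A) \<le> 1"
    using card_vimage_inj_on_le[OF assms(1), of "{g}"] by simp
  then show ?thesis using assms(2) by (simp add: Int_commute vimage_def)
qed

lemma exists_agent_unlikely_to_receive:
  fixes D :: "('a \<Rightarrow> 'b) pmf"
  assumes "finite (set_pmf D)" "\<forall>\<mu>\<in>set_pmf D. inj_on \<mu> A" "finite A" "A \<noteq> {}"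
  shows "\<exists>i\<in>A. measure_pmf.expectation D (\<lambda>\<mu>. of_bool (\<mu> i = g)) \<le> 1 / card A"
proof (rule ccontr)
  assume "\<not> ?thesis"
  then have "(\<Sum>i\<in>A. 1 / card A) < (\<Sum>i\<in>A. measure_pmf.expectation D (\<lambda>\<mu>. of_bool (\<mu> i = g)))"
    using assms(3,4) by (intro sum_strict_mono) auto
  also have "\<dots> = measure_pmf.expectation D (\<lambda>\<mu>. \<Sum>i\<in>A. of_bool (\<mu> i = g))"
    using assms(1) by (intro Bochner_Integration.integral_sum[symmetric] integrable_measure_pmf_finite)
  also have "\<dots> \<le> measure_pmf.expectation D (\<lambda>_. 1)"
  proof (rule integral_mono_AE)
    show "AE \<mu> in D. (\<Sum>i\<in>A. of_bool (\<mu> i = g)) \<le> (1 :: real)"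
      using assms(2,3) by (simp add: AE_measure_pmf_iff sum_of_bool_eq_le_1 del: sum_of_bool_eq)
  qed (use assms(1) in \<open>simp_all add: integrable_measure_pmf_finite\<close>)
  finally show False using assms(3,4) by simp
qed

lemma sqrt_le_twice_floor_sqrt:
  assumes "1 \<le> n" shows "sqrt (real n) \<le> 2 * real (floor_sqrt n)"
proof -
  have "1 \<le> floor_sqrt n" using assms by (simp add: le_floor_sqrtI)
  then have "n \<le> (2 * floor_sqrt n) ^ 2"
    using Suc_floor_sqrt_power2_gt[of n] power_mono[of "Suc (floor_sqrt n)" "2 * floor_sqrt n" 2]
    by linarith
  then have "real n \<le> (2 * real (floor_sqrt n)) ^ 2"
    by (metis of_nat_le_iff of_nat_mult of_nat_numeral of_nat_power)
  then have "sqrt (real n) \<le> sqrt ((2 * real (floor_sqrt n)) ^ 2)" by (rule real_sqrt_le_mono)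
  then show ?thesis
    by (simp only: real_sqrt_abs abs_of_nonneg of_nat_0_le_iff mult_nonneg_nonneg zero_le_numeral)
qed

text \<open>Agent \<open>i\<close> ranks item \<open>i div k\<close> first, so the first \<open>k\<^sup>2\<close> agents form \<open>k\<close> groups
  of \<open>k\<close> agents, each group competing for a single favourite item.\<close>

definition light_profile :: "nat \<Rightarrow> nat \<Rightarrow> nat \<Rightarrow> nat \<Rightarrow> real" where
  "light_profile n k i = (if i < n then light_valuation n (i div k) else (\<lambda>_. 0))"

definition heavy_profile :: "nat \<Rightarrow> nat \<Rightarrow> nat set \<Rightarrow> nat \<Rightarrow> nat \<Rightarrow> real" where
  "heavy_profile n k H i = (if i \<in> H then heavy_valuation n (i div k) else light_profile n k i)"

lemma light_profile_in_profiles: "1 \<le> n \<Longrightarrow> light_profile n k \<in> profiles n"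
  by (auto simp: profiles_def light_profile_def unit_sum_valuation_light)

lemma heavy_profile_in_profiles:
  "1 \<le> n \<Longrightarrow> H \<subseteq> {..<n} \<Longrightarrow> heavy_profile n k H \<in> profiles n"
  unfolding heavy_profile_def
  by (intro profiles_override light_profile_in_profiles unit_sum_valuation_heavy)

lemma ordinal_heavy_profile_eq:
  assumes "ordinal n J" "1 \<le> n" "H \<subseteq> {..<n}"
  shows "J (heavy_profile n k H) = J (light_profile n k)"
  unfolding heavy_profile_def
  by (rule ordinal_override_eq[OF assms(1) light_profile_in_profiles[OF assms(2)] assms(3)])
    (simp_all add: assms(2) unit_sum_valuation_heavy heavy_valuation_less_iff_light light_profile_def)

lemma welfare_heavy_profile_le:
  assumes "1 \<le> n" "H \<subseteq> {..<n}"
  shows "welfare n (heavy_profile n k H) \<mu> \<le> (\<Sum>i\<in>H. of_bool (\<mu> i = i div k)) + 3"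
proof -
  have agent: "heavy_profile n k H i (\<mu> i) \<le> (if i \<in> H then of_bool (\<mu> i = i div k) else 0) + 3 / real n"
    if "i < n" for i
  proof (cases "i \<in> H")
    case True
    have "i div k < n" using \<open>i < n\<close> div_le_dividend le_less_trans by blast
    moreover have "heavy_valuation n (i div k) (\<mu> i) \<le> 1"
      using unit_sum_valuation_le_1[OF unit_sum_valuation_heavy[OF assms(1)]] .
    moreover have "1 / real n \<le> 3 / real n" by (simp add: divide_right_mono)
    ultimately have "heavy_valuation n (i div k) (\<mu> i) \<le> of_bool (\<mu> i = i div k) + 3 / real n"
      using assms(1) heavy_valuation_le[of n "i div k" "\<mu> i"] by (cases "\<mu> i = i div k") auto
    then show ?thesis using True by (simp add: heavy_profile_def)
  qed (use that assms(1) light_valuation_le in \<open>simp add: heavy_profile_def light_profile_def\<close>)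
  have "welfare n (heavy_profile n k H) \<mu>
      \<le> (\<Sum>i<n. (if i \<in> H then of_bool (\<mu> i = i div k) else 0) + 3 / real n)"
    unfolding welfare_def by (intro sum_mono agent) simp
  also have "\<dots> = (\<Sum>i\<in>H. of_bool (\<mu> i = i div k)) + 3"
    using assms
    by (simp add: sum.distrib sum.inter_restrict[OF finite_lessThan, symmetric] Int_absorb1
        del: sum_of_bool_eq)
  finally show ?thesis .
qed

lemma expected_welfare_heavy_profile_le:
  fixes p :: real
  assumes "finite (set_pmf D)" "1 \<le> n" "H \<subseteq> {..<n}"
    and "\<And>i. i \<in> H \<Longrightarrow> measure_pmf.expectation D (\<lambda>\<mu>. of_bool (\<mu> i = i div k)) \<le> p"
  shows "measure_pmf.expectation D (welfare n (heavy_profile n k H)) \<le> card H * p + 3"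
proof -
  have "measure_pmf.expectation D (welfare n (heavy_profile n k H))
      \<le> measure_pmf.expectation D (\<lambda>\<mu>. (\<Sum>i\<in>H. of_bool (\<mu> i = i div k)) + 3)"
    using assms(1) welfare_heavy_profile_le[OF assms(2,3)]
    by (intro integral_mono) (simp_all add: integrable_measure_pmf_finite)
  also have "\<dots> = (\<Sum>i\<in>H. measure_pmf.expectation D (\<lambda>\<mu>. of_bool (\<mu> i = i div k))) + 3"
    using assms(1) by (simp add: integrable_measure_pmf_finite Bochner_Integration.integral_sum)
  also have "\<dots> \<le> (\<Sum>i\<in>H. p) + 3" by (intro add_right_mono sum_mono assms(4))
  finally show ?thesis by simp
qed

lemma max_welfare_heavy_profile_ge:
  assumes "1 \<le> n" "H \<subseteq> {..<n}" "inj_on (\<lambda>i. i div k) H"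
  shows "card H / 2 \<le> Max (welfare n (heavy_profile n k H) ` outcomes n)"
proof -
  have top: "i div k < n" if "i \<in> H" for i
    using assms(2) that by (auto intro: le_less_trans[OF div_le_dividend])
  then have "(\<lambda>i. i div k) ` H \<subseteq> {..<n}" by auto
  then obtain \<mu> where \<mu>: "\<mu> permutes {..<n}" "\<And>i. i \<in> H \<Longrightarrow> \<mu> i = i div k"
    using ex_permutes_extending[OF finite_lessThan assms(2,3)] by blast
  have "card H / 2 = (\<Sum>i\<in>H. 1 / 2)" by simp
  also have "\<dots> \<le> (\<Sum>i\<in>H. heavy_profile n k H i (\<mu> i))"
    using heavy_valuation_top_ge[OF assms(1) top] by (intro sum_mono) (simp add: heavy_profile_def \<mu>(2))
  also have "\<dots> \<le> welfare n (heavy_profile n k H) \<mu>"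
    using heavy_profile_in_profiles[OF assms(1,2), of k] assms(2) unfolding welfare_def
    by (intro sum_mono2) (auto simp: profiles_def intro: unit_sum_valuation_nonneg)
  also have "\<dots> \<le> Max (welfare n (heavy_profile n k H) ` outcomes n)"
    using \<mu>(1) by (intro Max_ge) (auto simp: outcomes_def finite_permutations)
  finally show ?thesis .
qed

lemma exists_unlikely_representatives:
  fixes D :: "(nat \<Rightarrow> nat) pmf"
  assumes "finite (set_pmf D)" "\<forall>\<mu>\<in>set_pmf D. inj \<mu>" "1 \<le> k"
  obtains H where "H \<subseteq> {..<k * k}" "card H = k" "inj_on (\<lambda>i. i div k) H"
    "\<And>i. i \<in> H \<Longrightarrow> measure_pmf.expectation D (\<lambda>\<mu>. of_bool (\<mu> i = i div k)) \<le> 1 / k"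
proof -
  have "\<exists>i\<in>{g * k..<g * k + k}. measure_pmf.expectation D (\<lambda>\<mu>. of_bool (\<mu> i = g))
      \<le> 1 / card {g * k..<g * k + k}" for g
    using assms(2,3) by (intro exists_agent_unlikely_to_receive[OF assms(1)]) (auto intro: inj_on_subset)
  then obtain rep where rep: "\<And>g. rep g \<in> {g * k..<g * k + k}"
    "\<And>g. measure_pmf.expectation D (\<lambda>\<mu>. of_bool (\<mu> (rep g) = g)) \<le> 1 / k"
    by (metis card_atLeastLessThan add_diff_cancel_left')
  have rep_div: "rep g div k = g" for g
    using rep(1)[of g] by (intro div_nat_eqI) (auto simp: mult.commute)
  have "inj_on rep {..<k}" by (metis inj_onI rep_div)
  moreover have "rep ` {..<k} \<subseteq> {..<k * k}"
  proof clarify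
    fix g assume "g < k"
    then have "g * k + k \<le> k * k" by (metis add.commute mult_Suc mult.commute Suc_leI mult_le_mono1)
    then show "rep g < k * k" using rep(1)[of g] by simp
  qed
  moreover have "inj_on (\<lambda>i. i div k) (rep ` {..<k})" by (auto simp: inj_on_def rep_div)
  ultimately show thesis
    using rep(2) by (intro that[of "rep ` {..<k}"]) (auto simp: card_image rep_div)
qed

lemma approx_ratio_le_8_div:
  assumes "mechanism n J" "ordinal n J" "1 \<le> k" "k * k \<le> n"
  shows "approx_ratio n J \<le> 8 / real k"
proof -
  have n: "1 \<le> n" using assms(3,4) one_le_mult_iff[of k k] by linarith
  define D where "D = J (light_profile n k)"
  have "set_pmf D \<subseteq> outcomes n"
    using assms(1) light_profile_in_profiles[OF n] by (auto simp: mechanism_def D_def)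
  then have "finite (set_pmf D)" "\<forall>\<mu>\<in>set_pmf D. inj \<mu>"
    by (auto simp: outcomes_def permutes_inj intro: finite_subset[OF _ finite_permutations])
  then obtain H where H: "H \<subseteq> {..<k * k}" "card H = k" "inj_on (\<lambda>i. i div k) H"
    "\<And>i. i \<in> H \<Longrightarrow> measure_pmf.expectation D (\<lambda>\<mu>. of_bool (\<mu> i = i div k)) \<le> 1 / k"
    using exists_unlikely_representatives assms(3) by blast
  have Hn: "H \<subseteq> {..<n}" using H(1) assms(4) by auto
  define U where "U = heavy_profile n k H"
  have U: "U \<in> profiles n" "J U = D"
    using heavy_profile_in_profiles ordinal_heavy_profile_eq n Hn assms(2) by (simp_all add: U_def D_def)
  have "measure_pmf.expectation D (welfare n U) \<le> card H * (1 / k) + 3"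
    unfolding U_def by (rule expected_welfare_heavy_profile_le[OF _ n Hn H(4)]) fact
  then have expected: "measure_pmf.expectation (J U) (welfare n U) \<le> 4"
    using H(2) assms(3) by (simp add: U)
  have optimal: "real k / 2 \<le> Max (welfare n U ` outcomes n)"
    using max_welfare_heavy_profile_ge[OF n Hn H(3)] H(2) by (simp add: U_def)
  have "approx_ratio n J \<le> measure_pmf.expectation (J U) (welfare n U) / Max (welfare n U ` outcomes n)"
    by (rule approx_ratio_le[OF assms(1) U(1)])
  also have "\<dots> \<le> 4 / (real k / 2)"
    using expected optimal assms(3) U(1) welfare_nonneg
    by (intro frac_le integral_nonneg_AE AE_I2) auto
  finally show ?thesis by simp
qed

theorem lemma8:
  shows "\<exists>C>0. \<forall>n\<ge>1. \<forall>J. mechanism n J \<and> ordinal n J \<longrightarrow>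
            approx_ratio n J \<le> C / sqrt (real n)"
proof (intro exI[of _ 16] conjI allI impI)
  fix n J assume "1 \<le> n" "mechanism n J \<and> ordinal n J"
  then have "approx_ratio n J \<le> 8 / real (floor_sqrt n)"
    by (intro approx_ratio_le_8_div) (auto simp: le_floor_sqrtI floor_sqrt_power2_le[unfolded power2_eq_square])
  also have "\<dots> \<le> 16 / sqrt (real n)"
    using sqrt_le_twice_floor_sqrt[OF \<open>1 \<le> n\<close>] \<open>1 \<le> n\<close>
    by (simp add: divide_simps le_floor_sqrtI)
  finally show "approx_ratio n J \<le> 16 / sqrt (real n)" .
qed simp

end
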